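(* Let $A$ be a finite-dimensional semisimple $\mathbb Z_2$-graded algebra over $\mathbb C$ and $B\subset A$ a semisimple graded subalgebra. Then the graded centralizer $Z(A,B)$ equals the ordinary centralizer $Z(A_0,B_0)=\{a\in A_0: ab=ba \text{ for all } b\in B_0\}$ of the even part $B_0$ in the even part $A_0$.
   Context: For a $\mathbb Z_2$-graded algebra $A=A_0\oplus A_1$, the parity automorphism $\theta$ acts as $+1$ on $A_0$ and $-1$ on $A_1$. For a graded subalgebra $B$ (with $B_i=B\cap A_i$), the graded centralizer is $Z(A,B)=Z_0(|A|,|B|)+Z_0^\theta(|A|,|B|)$, where $Z_0(|A|,|B|)=\{a\in A_0: ab=ba\ \forall b\in B\}$ and $Z_0^\theta(|A|,|B|)=\{a\in A_0: ab=\theta(b)a\ \forall b\in B\}$. Semisimplicity of a graded algebra: every two-sided graded ideal has a graded complementary two-sided ideal (for finite-dimensional algebras this is equivalent to ordinary semisimplicity). *)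

theory Defs
  imports Complex_Main
begin

text \<open>A (unital, associative) algebra over the complex numbers: the carrier is the
  whole type 'a (a ring with 1), and s is a complex scalar multiplication making 'a a
  complex vector space, compatible with the multiplication.\<close>
definition cplx_algebra :: "(complex \<Rightarrow> 'a::ring_1 \<Rightarrow> 'a) \<Rightarrow> bool" where
  "cplx_algebra s \<longleftrightarrow> vector_space s \<and>
     (\<forall>c x y. s c (x * y) = s c x * y \<and> s c (x * y) = x * s c y)"

definition fin_dim :: "(complex \<Rightarrow> 'a::ring_1 \<Rightarrow> 'a) \<Rightarrow> bool" where
  "fin_dim s \<longleftrightarrow> (\<exists>S. finite S \<and> module.span s S = UNIV)"

definition graded_algebra :: "(complex \<Rightarrow> 'a::ring_1 \<Rightarrow> 'a) \<Rightarrow> 'a set \<Rightarrow> 'a set \<Rightarrow> bool" where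
  "graded_algebra s A0 A1 \<longleftrightarrow> cplx_algebra s \<and>
     module.subspace s A0 \<and> module.subspace s A1 \<and> A0 \<inter> A1 = {0} \<and>
     (\<forall>x. \<exists>u\<in>A0. \<exists>v\<in>A1. x = u + v) \<and>
     (\<forall>x\<in>A0. \<forall>y\<in>A0. x * y \<in> A0) \<and> (\<forall>x\<in>A0. \<forall>y\<in>A1. x * y \<in> A1) \<and>
     (\<forall>x\<in>A1. \<forall>y\<in>A0. x * y \<in> A1) \<and> (\<forall>x\<in>A1. \<forall>y\<in>A1. x * y \<in> A0)"

definition graded_subset :: "'a::ring_1 set \<Rightarrow> 'a set \<Rightarrow> 'a set \<Rightarrow> bool" where
  "graded_subset A0 A1 S \<longleftrightarrow> (\<forall>x\<in>S. \<exists>u\<in>S \<inter> A0. \<exists>v\<in>S \<inter> A1. x = u + v)"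

definition graded_subalgebra :: "(complex \<Rightarrow> 'a::ring_1 \<Rightarrow> 'a) \<Rightarrow> 'a set \<Rightarrow> 'a set \<Rightarrow> 'a set \<Rightarrow> bool" where
  "graded_subalgebra s A0 A1 B \<longleftrightarrow> module.subspace s B \<and> 1 \<in> B \<and>
     (\<forall>x\<in>B. \<forall>y\<in>B. x * y \<in> B) \<and> graded_subset A0 A1 B"

definition ideal_in :: "(complex \<Rightarrow> 'a::ring_1 \<Rightarrow> 'a) \<Rightarrow> 'a set \<Rightarrow> 'a set \<Rightarrow> bool" where
  "ideal_in s B I \<longleftrightarrow> module.subspace s I \<and> I \<subseteq> B \<and>
     (\<forall>b\<in>B. \<forall>x\<in>I. b * x \<in> I \<and> x * b \<in> I)"

definition graded_semisimple :: "(complex \<Rightarrow> 'a::ring_1 \<Rightarrow> 'a) \<Rightarrow> 'a set \<Rightarrow> 'a set \<Rightarrow> 'a set \<Rightarrow> bool" where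
  "graded_semisimple s A0 A1 B \<longleftrightarrow>
     (\<forall>I. ideal_in s B I \<and> graded_subset A0 A1 I \<longrightarrow>
        (\<exists>J. ideal_in s B J \<and> graded_subset A0 A1 J \<and> I \<inter> J = {0} \<and>
             B = {x + y | x y. x \<in> I \<and> y \<in> J}))"

text \<open>Parity automorphism theta: +1 on A0, -1 on A1.\<close>
definition even_part :: "'a::ring_1 set \<Rightarrow> 'a set \<Rightarrow> 'a \<Rightarrow> 'a" where
  "even_part A0 A1 x = (THE u. u \<in> A0 \<and> x - u \<in> A1)"

definition parity :: "'a::ring_1 set \<Rightarrow> 'a set \<Rightarrow> 'a \<Rightarrow> 'a" where
  "parity A0 A1 x = even_part A0 A1 x - (x - even_part A0 A1 x)"

definition Z0 :: "'a::ring_1 set \<Rightarrow> 'a set \<Rightarrow> 'a set" where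
  "Z0 A0 B = {a \<in> A0. \<forall>b\<in>B. a * b = b * a}"

definition Z0_theta :: "'a::ring_1 set \<Rightarrow> 'a set \<Rightarrow> 'a set \<Rightarrow> 'a set" where
  "Z0_theta A0 A1 B = {a \<in> A0. \<forall>b\<in>B. a * b = parity A0 A1 b * a}"

definition graded_centralizer :: "'a::ring_1 set \<Rightarrow> 'a set \<Rightarrow> 'a set \<Rightarrow> 'a set" where
  "graded_centralizer A0 A1 B = {x + y | x y. x \<in> Z0 A0 B \<and> y \<in> Z0_theta A0 A1 B}"

end

theory Submission
  imports Defs
begin

(* Every element of the graded centralizer is even and commutes with B0,
   since the parity map is the identity on B0; this is the easy inclusion.
   Conversely let a \<in> A0 commute with B0.  The subspace I spanned by B1 and B1*B1 is a graded
   two-sided ideal of B; graded semisimplicity of B provides a complementary ideal J, and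
   splitting 1 = e + f along B = I + J yields an element f \<in> B0 that is central in B and
   annihilates B1, while e lies in the span of B1*B1 and acts as the identity on B1.
   Writing e = \<Sum> u_i v_i with u_i, v_i \<in> B1, the "twisted" element p = \<Sum> u_i a v_i is even,
   commutes with B0 and satisfies p b = b a, b p = a b for b \<in> B1.  Hence
   a = a f + (a e + p)/2 + (a e - p)/2 with the first two summands in Z0 and the last in Z0^\<theta>. *)

locale cplx_alg =
  fixes s :: "complex \<Rightarrow> 'a::ring_1 \<Rightarrow> 'a"
  assumes alg: "cplx_algebra s"
begin

sublocale vector_space s
  using alg by (simp add: cplx_algebra_def)

lemma scale_mult_left [simp]: "s c x * y = s c (x * y)"
  using alg by (simp add: cplx_algebra_def)

lemma scale_mult_right [simp]: "x * s c y = s c (x * y)"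
  using alg by (metis cplx_algebra_def)

text \<open>Solution sets of linear equations between two-sided multiples are subspaces; this is
  what makes induction over spans possible below.\<close>
lemma subspace_sandwich_eq: "subspace {x. l * x * r = l' * x * r'}"
  by (rule subspaceI) (auto simp: distrib_left distrib_right)

lemma subspace_multiples_in:
  assumes "subspace S"
  shows "subspace {x. b * x \<in> S \<and> x * b \<in> S}"
  using assms by (intro subspaceI) (auto simp: distrib_left distrib_right subspace_0 subspace_add subspace_scale)

lemma ideal_span:
  assumes B: "subspace B" and XB: "X \<subseteq> B"
    and mult: "\<And>b x. b \<in> B \<Longrightarrow> x \<in> X \<Longrightarrow> b * x \<in> span X \<and> x * b \<in> span X"
  shows "ideal_in s B (span X)"
  unfolding ideal_in_def
proof (intro conjI ballI)
  show "subspace (span X)" by simp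
  show "span X \<subseteq> B" using span_minimal[OF XB B] .
next
  fix b x assume b: "b \<in> B" and x: "x \<in> span X"
  have "span X \<subseteq> {x. b * x \<in> span X \<and> x * b \<in> span X}"
    using mult[OF b] by (intro span_minimal subspace_multiples_in) auto
  then show "b * x \<in> span X" "x * b \<in> span X" using x by auto
qed

lemma annihilates_span:
  assumes "\<And>x. x \<in> X \<Longrightarrow> c * x = 0 \<and> x * c = 0" and "y \<in> span X"
  shows "c * y = 0 \<and> y * c = 0"
proof -
  have "subspace {y. c * y = 0 \<and> y * c = 0}"
    by (rule subspaceI) (auto simp: distrib_left distrib_right)
  then have "span X \<subseteq> {y. c * y = 0 \<and> y * c = 0}"
    using assms(1) by (intro span_minimal) auto
  then show ?thesis using assms(2) by blast
qed

lemma complementary_ideals_unit: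
  assumes I: "ideal_in s B I" and J: "ideal_in s B J" and IJ: "I \<inter> J = {0}"
    and one: "1 \<in> B" and sum: "B = {x + y | x y. x \<in> I \<and> y \<in> J}"
  obtains e f where "e \<in> I" "f \<in> J" "1 = e + f"
    and "\<And>i j. i \<in> I \<Longrightarrow> j \<in> J \<Longrightarrow> i * j = 0 \<and> j * i = 0"
    and "\<And>b. b \<in> B \<Longrightarrow> b * f = f * b"
proof -
  obtain e f where ef: "e \<in> I" "f \<in> J" "1 = e + f" using one sum by blast
  have annihilate: "i * j = 0 \<and> j * i = 0" if "i \<in> I" "j \<in> J" for i j
  proof -
    have "i * j \<in> I \<inter> J" "j * i \<in> I \<inter> J"
      using I J that unfolding ideal_in_def by blast+
    then show ?thesis using IJ by blast
  qed
  have central: "b * f = f * b" if b: "b \<in> B" for b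
  proof -
    have "b * e + b * f = e * b + f * b"
      using ef(3) by (metis distrib_left distrib_right mult_1_left mult_1_right)
    then have "b * e - e * b = f * b - b * f" by (simp add: algebra_simps)
    moreover have "b * e - e * b \<in> I"
      using I b ef(1) unfolding ideal_in_def by (simp add: subspace_diff)
    moreover have "f * b - b * f \<in> J"
      using J b ef(2) unfolding ideal_in_def by (simp add: subspace_diff)
    ultimately have "f * b - b * f \<in> I \<inter> J" by simp
    then show ?thesis using IJ by simp
  qed
  show thesis using that ef annihilate central by blast
qed

end

locale graded_alg = cplx_alg s for s :: "complex \<Rightarrow> 'a::ring_1 \<Rightarrow> 'a" +
  fixes A0 A1 :: "'a set"
  assumes graded: "graded_algebra s A0 A1"
begin

lemma even_subspace: "subspace A0"
  using graded by (simp add: graded_algebra_def)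

lemma odd_subspace: "subspace A1"
  using graded by (simp add: graded_algebra_def)

lemma even_odd_split: "\<exists>u\<in>A0. \<exists>v\<in>A1. x = u + v"
  using graded by (simp add: graded_algebra_def)

lemma mult_even_even: "x \<in> A0 \<Longrightarrow> y \<in> A0 \<Longrightarrow> x * y \<in> A0"
  and mult_even_odd: "x \<in> A0 \<Longrightarrow> y \<in> A1 \<Longrightarrow> x * y \<in> A1"
  and mult_odd_even: "x \<in> A1 \<Longrightarrow> y \<in> A0 \<Longrightarrow> x * y \<in> A1"
  and mult_odd_odd: "x \<in> A1 \<Longrightarrow> y \<in> A1 \<Longrightarrow> x * y \<in> A0"
  using graded by (simp_all add: graded_algebra_def)

lemma even_odd_zero: "x \<in> A0 \<Longrightarrow> x \<in> A1 \<Longrightarrow> x = 0"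
  using graded by (auto simp: graded_algebra_def)

lemma even_odd_split_unique:
  assumes "u \<in> A0" "u' \<in> A0" "v \<in> A1" "v' \<in> A1" "u + v = u' + v'"
  shows "u = u' \<and> v = v'"
proof -
  have "u - u' = v' - v" using assms(5) by (simp add: algebra_simps)
  moreover have "u - u' \<in> A0" "v' - v \<in> A1"
    using assms(1-4) even_subspace odd_subspace by (simp_all add: subspace_diff)
  ultimately have "v' - v = 0" by (metis even_odd_zero)
  then show ?thesis using \<open>u - u' = v' - v\<close> by simp
qed

lemma parity_split:
  assumes u: "u \<in> A0" and v: "v \<in> A1"
  shows "parity A0 A1 (u + v) = u - v"
proof -
  have "even_part A0 A1 (u + v) = u"
    unfolding even_part_def
  proof (rule the_equality)
    show "u \<in> A0 \<and> u + v - u \<in> A1" using u v by simp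
  next
    fix w assume w: "w \<in> A0 \<and> u + v - w \<in> A1"
    have "w + (u + v - w) = u + v" by simp
    then show "w = u" using even_odd_split_unique w u v by blast
  qed
  then show ?thesis unfolding parity_def by simp
qed

lemma parity_even: "b \<in> A0 \<Longrightarrow> parity A0 A1 b = b"
  using parity_split[of b 0] subspace_0[OF odd_subspace] by simp

lemma one_even: "1 \<in> A0"
proof -
  obtain u v where uv: "u \<in> A0" "v \<in> A1" "1 = u + v" using even_odd_split by blast
  have zero: "0 \<in> A0" "0 \<in> A1" using even_subspace odd_subspace subspace_0 by blast+
  have "0 + v = v * v + v * u"
    using uv(3) by (metis add.commute add_0 distrib_left mult_1_right)
  then have vv: "v * v = 0"
    using even_odd_split_unique[OF zero(1) mult_odd_odd[OF uv(2) uv(2)] uv(2) mult_odd_even[OF uv(2,1)]]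
    by simp
  have "u + 0 = u * u + u * v"
    using uv(3) by (metis add_0_right distrib_left mult_1_right)
  then have uv0: "u * v = 0"
    using even_odd_split_unique[OF uv(1) mult_even_even[OF uv(1) uv(1)] zero(2) mult_even_odd[OF uv(1,2)]]
    by simp
  have "v = u * v + v * v"
    using uv(3) by (metis distrib_right mult_1_left)
  then show ?thesis using vv uv0 uv(1,3) by simp
qed

lemma span_homogeneous_graded:
  assumes "X \<subseteq> A0 \<union> A1"
  shows "graded_subset A0 A1 (span X)"
  unfolding graded_subset_def
proof
  fix x assume x: "x \<in> span X"
  have "(X \<inter> A0) \<union> (X \<inter> A1) = X" using assms by blast
  then obtain u v where uv: "u \<in> span (X \<inter> A0)" "v \<in> span (X \<inter> A1)" "x = u + v"
    using x span_Un[of "X \<inter> A0" "X \<inter> A1"] by auto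
  have "span (X \<inter> A0) \<subseteq> span X" "span (X \<inter> A1) \<subseteq> span X"
    by (simp_all add: span_mono)
  moreover have "span (X \<inter> A0) \<subseteq> A0" "span (X \<inter> A1) \<subseteq> A1"
    by (simp_all add: span_minimal even_subspace odd_subspace)
  ultimately have "span (X \<inter> A0) \<subseteq> span X \<inter> A0" "span (X \<inter> A1) \<subseteq> span X \<inter> A1"
    by blast+
  then show "\<exists>u\<in>span X \<inter> A0. \<exists>v\<in>span X \<inter> A1. x = u + v" using uv by blast
qed

lemma even_in_span_even_part:
  assumes X0: "X0 \<subseteq> A0" and X1: "X1 \<subseteq> A1" and z: "z \<in> span (X1 \<union> X0)" "z \<in> A0"
  shows "z \<in> span X0"
proof -
  obtain x y where xy: "x \<in> span X1" "y \<in> span X0" "z = x + y"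
    using z(1) unfolding span_Un by blast
  have "x \<in> A1" "y \<in> A0"
    using xy span_minimal X0 X1 even_subspace odd_subspace by blast+
  then have "x \<in> A0" using z(2) xy(3) even_subspace by (metis add_diff_cancel_right' subspace_diff)
  then have "x = 0" using \<open>x \<in> A1\<close> even_odd_zero by blast
  then show ?thesis using xy by simp
qed

lemma graded_centralizer_commutes_even:
  "graded_centralizer A0 A1 B \<subseteq> {a \<in> A0. \<forall>b \<in> B \<inter> A0. a * b = b * a}"
proof
  fix z assume "z \<in> graded_centralizer A0 A1 B"
  then obtain x y where z: "z = x + y" "x \<in> Z0 A0 B" "y \<in> Z0_theta A0 A1 B"
    unfolding graded_centralizer_def by blast
  have "z \<in> A0" using z even_subspace subspace_add unfolding Z0_def Z0_theta_def by blast
  moreover have "z * b = b * z" if "b \<in> B \<inter> A0" for b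
    using z that parity_even unfolding Z0_def Z0_theta_def by (simp add: distrib_left distrib_right)
  ultimately show "z \<in> {a \<in> A0. \<forall>b \<in> B \<inter> A0. a * b = b * a}" by blast
qed

end

locale graded_subalg = graded_alg s A0 A1 for s :: "complex \<Rightarrow> 'a::ring_1 \<Rightarrow> 'a" and A0 A1 +
  fixes B :: "'a set"
  assumes subalg: "graded_subalgebra s A0 A1 B"
begin

abbreviation B0 :: "'a set" where "B0 \<equiv> B \<inter> A0"
abbreviation B1 :: "'a set" where "B1 \<equiv> B \<inter> A1"

lemma B_subspace: "subspace B"
  and one_in_B: "1 \<in> B"
  and mult_in_B: "x \<in> B \<Longrightarrow> y \<in> B \<Longrightarrow> x * y \<in> B"
  using subalg by (simp_all add: graded_subalgebra_def)

lemma B_split: "b \<in> B \<Longrightarrow> \<exists>b0\<in>B0. \<exists>b1\<in>B1. b = b0 + b1"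
  using subalg by (auto simp: graded_subalgebra_def graded_subset_def)

lemma mult_B0_B1: "x \<in> B0 \<Longrightarrow> y \<in> B1 \<Longrightarrow> x * y \<in> B1"
  and mult_B1_B0: "x \<in> B1 \<Longrightarrow> y \<in> B0 \<Longrightarrow> x * y \<in> B1"
  and mult_B1_B1: "x \<in> B1 \<Longrightarrow> y \<in> B1 \<Longrightarrow> x * y \<in> B0"
  by (simp_all add: mult_in_B mult_even_odd mult_odd_even mult_odd_odd)

text \<open>Products of two odd elements of B; they span the even part of the ideal generated by B1.\<close>
definition odd_square :: "'a set" where
  "odd_square = {u * v | u v. u \<in> B1 \<and> v \<in> B1}"

definition odd_ideal :: "'a set" where
  "odd_ideal = span (B1 \<union> odd_square)"

lemma odd_square_even: "odd_square \<subseteq> B0"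
  unfolding odd_square_def using mult_B1_B1 by blast

lemma odd_generators_stable:
  assumes b: "b \<in> B0 \<union> B1" and x: "x \<in> B1 \<union> odd_square"
  shows "b * x \<in> B1 \<union> odd_square \<and> x * b \<in> B1 \<union> odd_square"
proof (cases "x \<in> B1")
  case True
  then show ?thesis
    using b mult_B0_B1 mult_B1_B0 unfolding odd_square_def by blast
next
  case False
  then obtain u v where uv: "u \<in> B1" "v \<in> B1" "x = u * v"
    using x unfolding odd_square_def by blast
  have "b * u \<in> B0 \<union> B1" "v * b \<in> B0 \<union> B1"
    using b uv mult_B0_B1 mult_B1_B1 mult_B1_B0 by blast+
  then have "(b * u) * v \<in> B1 \<union> odd_square" "u * (v * b) \<in> B1 \<union> odd_square"
    using uv(1,2) mult_B0_B1 mult_B1_B0 unfolding odd_square_def by blast+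
  moreover have "b * x = (b * u) * v" "x * b = u * (v * b)"
    using uv(3) by (simp_all add: mult.assoc)
  ultimately show ?thesis by simp
qed

lemma odd_ideal_graded_ideal: "ideal_in s B odd_ideal \<and> graded_subset A0 A1 odd_ideal"
proof
  show "ideal_in s B odd_ideal"
    unfolding odd_ideal_def
  proof (rule ideal_span[OF B_subspace])
    show "B1 \<union> odd_square \<subseteq> B" using odd_square_even by blast
  next
    fix b x assume b: "b \<in> B" and x: "x \<in> B1 \<union> odd_square"
    obtain b0 b1 where bb: "b0 \<in> B0" "b1 \<in> B1" "b = b0 + b1" using B_split[OF b] by blast
    have "b0 * x \<in> B1 \<union> odd_square \<and> x * b0 \<in> B1 \<union> odd_square"
      "b1 * x \<in> B1 \<union> odd_square \<and> x * b1 \<in> B1 \<union> odd_square"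
      using odd_generators_stable x bb(1,2) by blast+
    then show "b * x \<in> span (B1 \<union> odd_square) \<and> x * b \<in> span (B1 \<union> odd_square)"
      unfolding bb(3) distrib_left distrib_right by (meson span_add span_base)
  qed
  show "graded_subset A0 A1 odd_ideal"
    unfolding odd_ideal_def using odd_square_even by (intro span_homogeneous_graded) blast
qed

lemma odd_ideal_complement:
  assumes "graded_semisimple s A0 A1 B"
  obtains e f where "e \<in> span odd_square" "f \<in> B0" "1 = e + f"
    and "\<And>b. b \<in> B \<Longrightarrow> b * f = f * b"
    and "\<And>b. b \<in> B1 \<Longrightarrow> f * b = 0 \<and> b * f = 0"
proof -
  obtain J where J: "ideal_in s B J" "graded_subset A0 A1 J" "odd_ideal \<inter> J = {0}"
    "B = {x + y | x y. x \<in> odd_ideal \<and> y \<in> J}"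
    using assms[unfolded graded_semisimple_def, rule_format, OF odd_ideal_graded_ideal] by blast
  obtain e f where ef: "e \<in> odd_ideal" "f \<in> J" "1 = e + f"
    and annihilate: "\<And>i j. i \<in> odd_ideal \<Longrightarrow> j \<in> J \<Longrightarrow> i * j = 0 \<and> j * i = 0"
    and central: "\<And>b. b \<in> B \<Longrightarrow> b * f = f * b"
    using complementary_ideals_unit[OF conjunct1[OF odd_ideal_graded_ideal] J(1,3) one_in_B J(4)]
    by blast
  have B1_ideal: "B1 \<subseteq> odd_ideal"
    unfolding odd_ideal_def using span_superset[of "B1 \<union> odd_square"] by (rule order_trans[OF Un_upper1])
  have JB: "J \<subseteq> B" using J(1) unfolding ideal_in_def by blast
  obtain f0 f1 where f: "f0 \<in> J \<inter> A0" "f1 \<in> J \<inter> A1" "f = f0 + f1"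
    using J(2) ef(2) unfolding graded_subset_def by blast
  have "f1 \<in> B1" using f(2) JB by blast
  then have "f1 \<in> odd_ideal \<inter> J" using f(2) B1_ideal by blast
  then have "f = f0" using J(3) f(3) by simp
  then have fB0: "f \<in> B0" using f(1) JB by blast
  have "e = 1 - f" using ef(3) by (simp add: eq_diff_eq)
  then have "e \<in> A0" using subspace_diff[OF even_subspace one_even] fB0 by simp
  moreover have "odd_square \<subseteq> A0" "B1 \<subseteq> A1" using odd_square_even by blast+
  ultimately have "e \<in> span odd_square"
    using even_in_span_even_part ef(1) unfolding odd_ideal_def by blast
  moreover have "f * b = 0 \<and> b * f = 0" if "b \<in> B1" for b
    using annihilate[of b f] that B1_ideal ef(2) by blast
  ultimately show thesis using that ef(3) fB0 central by blast
qed

definition twisted_square :: "'a \<Rightarrow> 'a set" where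
  "twisted_square a = {u * a * v | u v. u \<in> B1 \<and> v \<in> B1}"

lemma twisted_square_even: "a \<in> A0 \<Longrightarrow> span (twisted_square a) \<subseteq> A0"
  unfolding twisted_square_def
  by (intro span_minimal even_subspace) (auto intro: mult_odd_odd mult_odd_even)

text \<open>The twisted element: if a commutes with B0, then for z = \<Sum> u_i v_i in the span of
  odd_square the element p = \<Sum> u_i a v_i satisfies b p = a b z and p b = z b a for odd b.
  Since the u_i, v_i are not unique, p is constructed by induction over the span.\<close>
lemma twisted_element:
  assumes a: "\<And>b. b \<in> B0 \<Longrightarrow> a * b = b * a" and z: "z \<in> span odd_square"
  obtains p where "p \<in> span (twisted_square a)"
    and "\<And>b. b \<in> B1 \<Longrightarrow> b * p = a * b * z \<and> p * b = z * b * a"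
proof -
  define Q where "Q = {z. \<exists>p\<in>span (twisted_square a). \<forall>b\<in>B1. b * p = a * b * z \<and> p * b = z * b * a}"
  have "subspace Q"
  proof (rule subspaceI)
    show "0 \<in> Q" unfolding Q_def using span_zero by force
  next
    fix x y assume "x \<in> Q" "y \<in> Q"
    then obtain p q where "p \<in> span (twisted_square a)" "q \<in> span (twisted_square a)"
      "\<forall>b\<in>B1. b * p = a * b * x \<and> p * b = x * b * a"
      "\<forall>b\<in>B1. b * q = a * b * y \<and> q * b = y * b * a"
      unfolding Q_def by blast
    then show "x + y \<in> Q"
      unfolding Q_def by (intro CollectI bexI[of _ "p + q"]) (simp_all add: distrib_left distrib_right span_add)
  next
    fix c x assume "x \<in> Q"
    then obtain p where "p \<in> span (twisted_square a)" "\<forall>b\<in>B1. b * p = a * b * x \<and> p * b = x * b * a"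
      unfolding Q_def by blast
    then show "s c x \<in> Q"
      unfolding Q_def by (intro CollectI bexI[of _ "s c p"]) (simp_all add: span_scale)
  qed
  moreover have "odd_square \<subseteq> Q"
  proof
    fix g assume "g \<in> odd_square"
    then obtain u v where uv: "u \<in> B1" "v \<in> B1" "g = u * v" unfolding odd_square_def by blast
    have "u * a * v \<in> span (twisted_square a)"
      using uv unfolding twisted_square_def by (blast intro: span_base)
    moreover have "b * (u * a * v) = a * b * g \<and> (u * a * v) * b = g * b * a" if b: "b \<in> B1" for b
    proof
      have "b * (u * a * v) = (a * (b * u)) * v" using a[OF mult_B1_B1[OF b uv(1)]] by (simp add: mult.assoc)
      then show "b * (u * a * v) = a * b * g" using uv(3) by (simp add: mult.assoc)
      have "(u * a * v) * b = u * ((v * b) * a)" using a[OF mult_B1_B1[OF uv(2) b]] by (simp add: mult.assoc)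
      then show "(u * a * v) * b = g * b * a" using uv(3) by (simp add: mult.assoc)
    qed
    ultimately show "g \<in> Q" unfolding Q_def by blast
  qed
  ultimately have "z \<in> Q" using span_minimal z by blast
  then show thesis using that unfolding Q_def by blast
qed

lemma twisted_commutes_even:
  assumes e: "e \<in> span odd_square" and unit: "1 = e + f"
    and f_central: "\<And>b. b \<in> B \<Longrightarrow> b * f = f * b" and pf: "p * f = 0" "f * p = 0"
    and p_odd: "\<And>b. b \<in> B1 \<Longrightarrow> p * b = b * a \<and> b * p = a * b"
    and b0: "b0 \<in> B0"
  shows "p * b0 = b0 * p"
proof -
  have "odd_square \<subseteq> {z. (p * b0) * z * 1 = b0 * z * p}"
  proof
    fix g assume "g \<in> odd_square"
    then obtain u v where uv: "u \<in> B1" "v \<in> B1" "g = u * v" unfolding odd_square_def by blast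
    have "p * b0 * g = (p * (b0 * u)) * v" using uv(3) by (simp add: mult.assoc)
    also have "\<dots> = b0 * u * (a * v)" using p_odd[OF mult_B0_B1[OF b0 uv(1)]] by (simp add: mult.assoc)
    also have "\<dots> = b0 * g * p" using p_odd[OF uv(2)] uv(3) by (simp add: mult.assoc)
    finally show "g \<in> {z. (p * b0) * z * 1 = b0 * z * p}" by simp
  qed
  then have "e \<in> {z. (p * b0) * z * 1 = b0 * z * p}"
    using span_minimal[OF _ subspace_sandwich_eq] e by blast
  then have pe: "p * b0 * e = b0 * e * p" by simp
  have "p * b0 = p * b0 * e + p * (b0 * f)" using unit by (metis distrib_left mult.assoc mult_1_right)
  also have "\<dots> = p * b0 * e" using f_central b0 pf(1) by (simp add: mult.assoc[symmetric])
  also have "\<dots> = b0 * e * p + b0 * (f * p)" using pe pf(2) by simp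
  also have "\<dots> = b0 * p" using unit by (metis distrib_left distrib_right mult.assoc mult_1_left)
  finally show ?thesis .
qed

lemma split_into_graded_centralizer:
  assumes a: "a \<in> A0" "\<And>b. b \<in> B0 \<Longrightarrow> a * b = b * a"
    and f: "f \<in> B0" "\<And>b. b \<in> B \<Longrightarrow> b * f = f * b" "\<And>b. b \<in> B1 \<Longrightarrow> f * b = 0 \<and> b * f = 0"
    and p: "p \<in> A0" "\<And>b. b \<in> B0 \<Longrightarrow> p * b = b * p" "\<And>b. b \<in> B1 \<Longrightarrow> p * b = b * a \<and> b * p = a * b"
  shows "a \<in> graded_centralizer A0 A1 B"
proof -
  define c where "c = a - a * f"
  have af_even: "a * f * b = b * (a * f)" if b: "b \<in> B0" for b
  proof -
    have "a * f * b = a * (b * f)" using f(2) b by (simp add: mult.assoc)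
    also have "\<dots> = b * (a * f)" using a(2)[OF b] by (simp add: mult.assoc[symmetric])
    finally show ?thesis .
  qed
  have af_odd: "a * f * b = 0 \<and> b * (a * f) = 0" if b: "b \<in> B1" for b
  proof
    show "a * f * b = 0" using f(3)[OF b] by (simp add: mult.assoc)
    have "b * (a * f) = (b * f) * a" using a(2)[OF f(1)] by (simp add: mult.assoc)
    then show "b * (a * f) = 0" using f(3)[OF b] by simp
  qed
  have c_even: "c * b = b * c" if "b \<in> B0" for b
    using a(2)[OF that] af_even[OF that] unfolding c_def by (simp add: left_diff_distrib right_diff_distrib)
  have c_odd: "c * b = a * b \<and> b * c = b * a" if "b \<in> B1" for b
    using af_odd[OF that] unfolding c_def by (simp add: left_diff_distrib right_diff_distrib mult.assoc)
  have afA0: "a * f \<in> A0" using mult_even_even[OF a(1)] f(1) by blast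
  have cA0: "c \<in> A0" unfolding c_def using subspace_diff[OF even_subspace a(1) afA0] .
  define x where "x = a * f + s (1/2) (c + p)"
  define y where "y = s (1/2) (c - p)"
  have "x \<in> Z0 A0 B"
    unfolding Z0_def
  proof (intro CollectI conjI ballI)
    show "x \<in> A0" unfolding x_def
      using afA0 cA0 p(1) by (simp add: even_subspace subspace_add subspace_scale)
  next
    fix b assume "b \<in> B"
    then obtain b0 b1 where bb: "b0 \<in> B0" "b1 \<in> B1" "b = b0 + b1" using B_split by blast
    have "(a * f) * b = b * (a * f)" "(c + p) * b = b * (c + p)"
      unfolding bb(3) using af_even[OF bb(1)] af_odd[OF bb(2)] c_even[OF bb(1)] c_odd[OF bb(2)]
        p(2)[OF bb(1)] p(3)[OF bb(2)] by (simp_all add: distrib_left distrib_right)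
    then show "x * b = b * x" unfolding x_def by (simp add: distrib_left distrib_right)
  qed
  moreover have "y \<in> Z0_theta A0 A1 B"
    unfolding Z0_theta_def
  proof (intro CollectI conjI ballI)
    show "y \<in> A0" unfolding y_def using cA0 p(1) by (simp add: even_subspace subspace_diff subspace_scale)
  next
    fix b assume "b \<in> B"
    then obtain b0 b1 where bb: "b0 \<in> B0" "b1 \<in> B1" "b = b0 + b1" using B_split by blast
    have "(c - p) * b = (b0 - b1) * (c - p)"
      unfolding bb(3) using c_even[OF bb(1)] c_odd[OF bb(2)] p(2)[OF bb(1)] p(3)[OF bb(2)]
      by (simp add: distrib_left distrib_right left_diff_distrib right_diff_distrib)
    moreover have "parity A0 A1 b = b0 - b1" using parity_split bb by blast
    ultimately show "y * b = parity A0 A1 b * y" unfolding y_def by simp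
  qed
  moreover have "a = x + y"
  proof -
    have "s (1/2) (c + p) + s (1/2) (c - p) = s (1/2 + 1/2) c"
      by (simp only: scale_right_distrib scale_right_diff_distrib scale_left_distrib) simp
    then show ?thesis unfolding x_def y_def c_def by (simp add: add.assoc)
  qed
  ultimately show ?thesis unfolding graded_centralizer_def by blast
qed

lemma even_commutant_in_graded_centralizer:
  assumes semisimple: "graded_semisimple s A0 A1 B"
  shows "{a \<in> A0. \<forall>b \<in> B0. a * b = b * a} \<subseteq> graded_centralizer A0 A1 B"
proof
  fix a assume "a \<in> {a \<in> A0. \<forall>b \<in> B0. a * b = b * a}"
  then have a: "a \<in> A0" "\<And>b. b \<in> B0 \<Longrightarrow> a * b = b * a" by auto
  obtain e f where e: "e \<in> span odd_square" and f: "f \<in> B0" and unit: "1 = e + f"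
    and f_central: "\<And>b. b \<in> B \<Longrightarrow> b * f = f * b"
    and f_odd: "\<And>b. b \<in> B1 \<Longrightarrow> f * b = 0 \<and> b * f = 0"
    using odd_ideal_complement[OF semisimple] by blast
  have e_odd: "b * e = b \<and> e * b = b" if "b \<in> B1" for b
    using f_odd[OF that] unit by (metis add.right_neutral distrib_left distrib_right mult_1_left mult_1_right)
  obtain p where p_span: "p \<in> span (twisted_square a)"
    and p_twist: "\<And>b. b \<in> B1 \<Longrightarrow> b * p = a * b * e \<and> p * b = e * b * a"
    using twisted_element[OF a(2) e] by blast
  have p_odd: "p * b = b * a \<and> b * p = a * b" if "b \<in> B1" for b
    using p_twist[OF that] e_odd[OF that] by (simp add: mult.assoc)
  have "f * x = 0 \<and> x * f = 0" if x: "x \<in> twisted_square a" for x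
  proof -
    obtain u v where "u \<in> B1" "v \<in> B1" "x = u * a * v"
      using x unfolding twisted_square_def by blast
    then show ?thesis using f_odd by (simp add: mult.assoc[symmetric]) (simp add: mult.assoc)
  qed
  then have pf: "f * p = 0 \<and> p * f = 0" using annihilates_span p_span by blast
  have p_even: "p * b = b * p" if "b \<in> B0" for b
    using twisted_commutes_even[OF e unit f_central _ _ p_odd that] pf by blast
  show "a \<in> graded_centralizer A0 A1 B"
    using split_into_graded_centralizer[OF a f f_central f_odd _ p_even p_odd]
      twisted_square_even[OF a(1)] p_span by blast
qed

end

theorem mainTheorem2:
  fixes s :: "complex \<Rightarrow> 'a::ring_1 \<Rightarrow> 'a" and A0 A1 B :: "'a set"
  assumes "graded_algebra s A0 A1"
    and "fin_dim s"
    and "graded_semisimple s A0 A1 UNIV"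
    and "graded_subalgebra s A0 A1 B"
    and "graded_semisimple s A0 A1 B"
  shows "graded_centralizer A0 A1 B = {a \<in> A0. \<forall>b \<in> B \<inter> A0. a * b = b * a}"
proof -
  interpret graded_subalg s A0 A1 B
    using assms(1,4) by unfold_locales (simp_all add: graded_algebra_def)
  show ?thesis
    using graded_centralizer_commutes_even even_commutant_in_graded_centralizer[OF assms(5)]
    by (rule subset_antisym)
qed

end
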